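(* Let $n$ be a positive integer and let $\Omega_1,\Omega_2$ be two distinct copies of $2^{[n]}$. For $i=1,2$ let $\bm{p}_i=(p_i^{(1)},\dots,p_i^{(n)})$ be a probability vector, write $p_i:=p_i^{(1)}$, and let $\mu_i$ be the product measure on $\Omega_i$, $\mu_i(U)=\sum_{x\in U}\prod_{\ell\in x}p_i^{(\ell)}\prod_{k\in[n]\setminus x}(1-p_i^{(k)})$. Assume that $p_i=\max\{p_i^{(\ell)}:\ell\in[n]\}$ for $i=1,2$, that $p_1\geqslant p_2$, and that $p_1\leqslant 1/2$. Let $w:=\{\ell\in[n]:(p_1^{(\ell)},p_2^{(\ell)})=(p_1,p_2)\}$. Let $U_1\subset\Omega_1$, $U_2\subset\Omega_2$ be cross-intersecting with $\mu_1(U_1)\mu_2(U_2)=p_1p_2$. Then for $i=1,2$, $$U_i=\{x\sqcup y: x\in U_i|_w,\ y\in\Omega_i|_{[n]\setminus w}\},$$ i.e. for $x\in\Omega_i$ we have $x\in U_i$ if and only if $x\cap w\in U_i$. In particular $U_1|_w,U_2|_w$ are cross-intersecting. Moreover, if $p_1=p_2=1/2$, then $|U_1|_w|=|U_2|_w|=2^{|w|-1}$.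
   Context: A probability vector has all coordinates strictly between $0$ and $1$. Families $U_1,U_2$ are cross-intersecting if $x\cap y\neq\emptyset$ for all $x\in U_1$, $y\in U_2$. For $E\subset\Omega_i$ and $z\subset[n]$, $E|_z:=\{x\cap z: x\in E\}$; thus $\Omega_i|_z$ is a copy of $2^z$. *)

theory Defs
  imports Complex_Main
begin

text \<open>Ground set [n] = {1..n}; Omega_i is Pow {1..n}.\<close>

definition prob_vector :: "nat \<Rightarrow> (nat \<Rightarrow> real) \<Rightarrow> bool" where
  "prob_vector n p \<longleftrightarrow> (\<forall>l\<in>{1..n}. 0 < p l \<and> p l < 1)"

definition prod_measure :: "nat \<Rightarrow> (nat \<Rightarrow> real) \<Rightarrow> nat set set \<Rightarrow> real" where
  "prod_measure n p U =
     (\<Sum>x\<in>U. (\<Prod>l\<in>x. p l) * (\<Prod>k\<in>{1..n} - x. 1 - p k))"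

definition cross_intersecting :: "'a set set \<Rightarrow> 'a set set \<Rightarrow> bool" where
  "cross_intersecting U1 U2 \<longleftrightarrow> (\<forall>x\<in>U1. \<forall>y\<in>U2. x \<inter> y \<noteq> {})"

definition restr :: "'a set set \<Rightarrow> 'a set \<Rightarrow> 'a set set" where
  "restr E z = (\<lambda>x. x \<inter> z) ` E"

end

theory Submission
  imports Defs
begin

text \<open>
  For cross-intersecting families whose coordinate probabilities are bounded by p and q, the
  pair of measures (a, b) stays in the region a b <= p q, (1-p)(1-q) a b <= p q (1-a)(1-b).
  Splitting on one coordinate writes both measures as mixtures of the measures of the slices,
  and the region is closed under such mixing. This is an elementary but delicate real
  inequality, which after monotonicity reductions only has to be checked for the extreme
  weights p and q.

  For an extremal pair each family is maximal, i.e. it consists of all sets meeting every member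
  of the other one. Raising the weights of a coordinate l to p and q cannot push the product above
  p q, so unless l lies in w the two slices at l of one of the families have equal measure and
  therefore coincide; by maximality l is then irrelevant for both families. If p = q = 1/2, all
  subsets of w have the same weight, and the cross-intersecting traces on w have sizes with sum at
  most 2^|w| and product 4^|w|/4, which forces both sizes to be 2^(|w|-1).
\<close>

section \<open>Mixing feasible pairs\<close>

text \<open>The odds bound (1-p)(1-q) a b <= p q (1-a)(1-b) is the strengthening of a b <= p q that
  makes the induction over coordinates go through.\<close>

definition feasible :: "real \<Rightarrow> real \<Rightarrow> real \<Rightarrow> real \<Rightarrow> bool" where
  "feasible p q a b \<longleftrightarrow> 0 \<le> a \<and> a \<le> 1 \<and> 0 \<le> b \<and> b \<le> 1 \<and> a*b \<le> p*q \<and>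
     (1-p)*(1-q)*a*b \<le> p*q*(1-a)*(1-b)"

text \<open>The largest b for which (a, b) satisfies the second inequality of feasible.\<close>

definition partner_bound :: "real \<Rightarrow> real \<Rightarrow> real \<Rightarrow> real" where
  "partner_bound p q a = p*q*(1-a) / (p*q + (1-p-q)*a)"

context
  fixes p q :: real
  assumes q_pos: "0 < q" and q_le_p: "q \<le> p" and p_le_half: "p \<le> 1/2"
begin

lemma mix_odds_bound:
  fixes a0 a1 b0 b1 :: real
  assumes a0: "0 \<le> a0" and a01: "a0 \<le> a1" and a1: "a1 \<le> 1"
    and h01: "(1-p)*(1-q)*a0*b1 \<le> p*q*(1-a0)*(1-b1)"
    and h10: "(1-p)*(1-q)*a1*b0 \<le> p*q*(1-a1)*(1-b0)"
  shows "(1-p)*(1-q)*((1-p)*a0+p*a1)*((1-q)*b0+q*b1)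
         \<le> p*q*(1-((1-p)*a0+p*a1))*(1-((1-q)*b0+q*b1))"
proof -
  define X where "X = (1-p)*a0+p*a1"
  define Y where "Y = (1-q)*b0+q*b1"
  define D0 where "D0 = p*q*(1-a0) + (1-p)*(1-q)*a0"
  define D1 where "D1 = p*q*(1-a1) + (1-p)*(1-q)*a1"
  define K where "K = p*q*(1-X) + (1-p)*(1-q)*X"
  have pq: "0 < p*q" using q_pos q_le_p by simp
  have "0 \<le> (1-p-q)*a0" "0 \<le> (1-p-q)*a1" using a0 a01 q_le_p p_le_half by auto
  then have D0p: "0 < D0" and D1p: "0 < D1"
    using pq unfolding D0_def D1_def by (auto simp: algebra_simps)
  have X01: "0 \<le> X" "X \<le> 1"
    using a0 a01 a1 p_le_half q_pos q_le_p unfolding X_def by (auto simp: convex_bound_le)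
  have K0: "0 \<le> K" unfolding K_def using X01 pq q_le_p p_le_half q_pos
    by (intro add_nonneg_nonneg mult_nonneg_nonneg) auto
  have hb1: "b1 * D0 \<le> p*q*(1-a0)" using h01 unfolding D0_def by (simp add: algebra_simps)
  have hb0: "b0 * D1 \<le> p*q*(1-a1)" using h10 unfolding D1_def by (simp add: algebra_simps)
  define Yn where "Yn = (1-q)*(p*q*(1-a1))*D0 + q*(p*q*(1-a0))*D1"
  have "Y*(D0*D1) = (1-q)*(b0*D1)*D0 + q*(b1*D0)*D1" unfolding Y_def by (simp add: algebra_simps)
  also have "\<dots> \<le> Yn" unfolding Yn_def using hb0 hb1 D0p D1p q_le_p p_le_half q_pos
    by (intro add_mono mult_right_mono mult_left_mono) auto
  finally have YD: "Y*(D0*D1) \<le> Yn" .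
  have "p*q*(1-X)*(D0*D1) - K*Yn
     = (a1-a0)*(1-p-q)*(1-p)*(1-q)*(p*q)*(p*q*(1-a1+a0) + a0*(1-p-q))"
    unfolding X_def K_def Yn_def D0_def D1_def by (simp add: algebra_simps)
  moreover have "0 \<le> (a1-a0)*(1-p-q)*(1-p)*(1-q)*(p*q)*(p*q*(1-a1+a0) + a0*(1-p-q))"
    using a01 q_le_p p_le_half pq a0 a1 q_pos by (intro mult_nonneg_nonneg add_nonneg_nonneg) auto
  moreover have "K*(Y*(D0*D1)) \<le> K*Yn" using YD K0 by (rule mult_left_mono)
  ultimately have "(K*Y)*(D0*D1) \<le> (p*q*(1-X))*(D0*D1)" by (simp add: algebra_simps)
  then have "K*Y \<le> p*q*(1-X)" using D0p D1p by simp
  then show ?thesis unfolding X_def[symmetric] Y_def[symmetric] K_def by (simp add: algebra_simps)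
qed

lemma product_bound_outside_window:
  fixes X Y :: real
  assumes X0: "0 \<le> X" and X1: "X \<le> 1"
    and odds: "(1-p)*(1-q)*X*Y \<le> p*q*(1-X)*(1-Y)"
    and out: "X \<le> q \<or> p \<le> X"
  shows "X*Y \<le> p*q"
proof (rule ccontr)
  assume "\<not> X*Y \<le> p*q"
  then have gt: "p*q < X*Y" by simp
  have pq: "0 < p*q" using q_pos q_le_p by simp
  have "(1-p)*(1-q)*(p*q) < (1-p)*(1-q)*(X*Y)"
    using gt q_le_p p_le_half by (intro mult_strict_left_mono) auto
  also have "\<dots> \<le> p*q*((1-X)*(1-Y))" using odds by (simp add: ac_simps)
  finally have "((1-p)*(1-q))*(p*q) < ((1-X)*(1-Y))*(p*q)" by (simp add: ac_simps)
  then have A: "(1-p)*(1-q) < (1-X)*(1-Y)" using pq by (simp add: mult_less_cancel_right)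
  have Xp: "0 < X" using gt pq X0 by (cases "X = 0") auto
  have "(1-X)*(X*(1-Y)) \<le> (1-X)*(X - p*q)"
    using gt X1 by (intro mult_left_mono) (auto simp: algebra_simps)
  moreover have "X*((1-p)*(1-q)) < X*((1-X)*(1-Y))" using A Xp by simp
  ultimately have "0 < -((X-p)*(X-q))" by (simp add: algebra_simps)
  moreover have "0 \<le> (X-p)*(X-q)"
    using out q_le_p by (auto intro: mult_nonpos_nonpos mult_nonneg_nonneg)
  ultimately show False by simp
qed

lemma mix_product_bound_q_le_a0:
  fixes a0 a1 b0 b1 :: real
  assumes a0q: "q \<le> a0" and a01: "a0 \<le> a1"
    and Xp: "(1-p)*a0+p*a1 < p"
    and P01: "a0 * b1 \<le> p*q" and P10: "a1 * b0 \<le> p*q"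
  shows "((1-p)*a0+p*a1)*((1-q)*b0+q*b1) \<le> p*q"
proof -
  define X where "X = (1-p)*a0+p*a1"
  define W where "W = (1-q)*a0 + q*a1"
  have pq: "0 < p*q" using q_pos q_le_p by simp
  have a0p: "0 < a0" and a1p: "0 < a1" using q_pos a0q a01 by auto
  have "q*(p*a1) \<le> q*(p - (1-p)*a0)" using Xp q_pos by simp
  moreover have "q*p \<le> (1-p)*q" using q_pos p_le_half by simp
  moreover have "(1-p)*q \<le> (1-p)*a0" using a0q p_le_half by (intro mult_left_mono) auto
  ultimately have key: "p*q*a1 \<le> (1-p)*(1-q)*a0" by (simp add: algebra_simps)
  have "a0*a1 - X*W = ((1-p)*(1-q)*a0 - p*q*a1)*(a1-a0)"
    unfolding X_def W_def by (simp add: algebra_simps)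
  moreover have "0 \<le> ((1-p)*(1-q)*a0 - p*q*a1)*(a1-a0)" using key a01 by simp
  ultimately have XW: "X*W \<le> a0*a1" by simp
  have "((1-q)*b0+q*b1)*(a0*a1) = (1-q)*(a1*b0)*a0 + q*(a0*b1)*a1" by (simp add: algebra_simps)
  also have "\<dots> \<le> (1-q)*(p*q)*a0 + q*(p*q)*a1"
    using P10 P01 a0p a1p q_le_p p_le_half q_pos by (intro add_mono mult_right_mono mult_left_mono) auto
  also have "\<dots> = p*q*W" unfolding W_def by (simp add: algebra_simps)
  finally have YD: "((1-q)*b0+q*b1)*(a0*a1) \<le> p*q*W" .
  have X0: "0 \<le> X" unfolding X_def using a0p a1p p_le_half q_pos q_le_p by simp
  have "(X*((1-q)*b0+q*b1))*(a0*a1) \<le> X*(p*q*W)"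
    using YD X0 by (simp add: mult_left_mono mult.assoc)
  also have "\<dots> = p*q*(X*W)" by (simp add: ac_simps)
  also have "\<dots> \<le> (p*q)*(a0*a1)" using XW pq by (intro mult_left_mono) auto
  finally show ?thesis unfolding X_def using a0p a1p by simp
qed

lemma middle_window_bound:
  fixes a0 t :: real
  assumes a0: "0 \<le> a0" and a0q: "a0 \<le> q" and tq: "q \<le> t" and tp: "t \<le> p"
  shows "((1-p)*a0 + p*t) * ((1-q)*(p*q + (1-p-q)*a0) + q*(1-a0)*t) \<le> t*(p*q + (1-p-q)*a0)"
proof -
  define D0 where "D0 = p*q + (1-p-q)*a0"
  define Phi where "Phi = (\<lambda>t. t*D0 - ((1-p)*a0+p*t)*((1-q)*D0 + q*(1-a0)*t))"
  have pq: "0 < p*q" using q_pos q_le_p by simp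
  have "q*(p*q*(1-q) + (1-p-2*q+p*q)*a0) = (q-a0)*(p*q*(1-q)) + a0*(q*(1-2*q))"
    by (simp add: algebra_simps)
  moreover have "0 \<le> (q-a0)*(p*q*(1-q)) + a0*(q*(1-2*q))"
    using a0 a0q q_pos q_le_p p_le_half pq by (intro add_nonneg_nonneg mult_nonneg_nonneg) auto
  ultimately have "0 \<le> q*(p*q*(1-q) + (1-p-2*q+p*q)*a0)" by simp
  then have "0 \<le> p*q*(1-q) + (1-p-2*q+p*q)*a0" using q_pos by (simp add: zero_le_mult_iff)
  moreover have "Phi q = (1-p)*(q-a0)*(p*q*(1-q) + (1-p-2*q+p*q)*a0)"
    unfolding Phi_def D0_def by (simp add: algebra_simps)
  ultimately have Phi_q: "0 \<le> Phi q" using a0q p_le_half by simp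
  \<comment> \<open>a sum-of-products certificate in the nonnegative quantities a0, q - a0, p - q, 1 - 2p\<close>
  define cert where "cert =
      8*q*(p - q)*(p - q)*(p - q)*(1 - 2*p) + 12*q*q*(p - q)*(p - q)
      + 26*a0*(p - q)*(p - q)*(1 - 2*p) + 46*(q - a0)*q*(p - q)*(1 - 2*p)
      + 18*a0*(q - a0)*(p - q)*(1 - 2*p) + 20*q*(p - q)*(p - q)*(1 - 2*p)
      + 2*q*q*(p - q)*(1 - 2*p)*(1 - 2*p) + 12*(q - a0)*(q - a0)*q*(p - q)
      + 11*a0*(p - q)*(1 - 2*p) + 4*(q - a0)*(q - a0)*(q - a0)*(p - q)*(1 - 2*p)
      + 6*(q - a0)*(q - a0)*q*(1 - 2*p) + 6*(q - a0)*(q - a0)*q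
      + 4*q*(p - q)*(p - q)*(1 - 2*p)*(1 - 2*p) + 6*(q - a0)*q*q*(1 - 2*p)*(1 - 2*p)
      + 4*a0*a0*a0*(p - q)*(1 - 2*p) + 12*a0*(q - a0)*(p - q) + 9*a0*(q - a0)*(1 - 2*p)
      + 15*a0*(q - a0)*(1 - 2*p)*(1 - 2*p) + 24*a0*(p - q)*(p - q)*(p - q)
      + 13*a0*(p - q)*(1 - 2*p)*(1 - 2*p) + 6*(q - a0)*(q - a0)*q*(1 - 2*p)*(1 - 2*p)
      + 12*(q - a0)*q*q*q*(1 - 2*p)"
  have "24 * Phi p = cert" unfolding Phi_def D0_def cert_def by (simp add: algebra_simps)
  moreover have "0 \<le> cert"
    unfolding cert_def using a0 a0q q_pos q_le_p p_le_half by (intro add_nonneg_nonneg mult_nonneg_nonneg; simp)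
  ultimately have Phi_p: "0 \<le> Phi p" by simp
  \<comment> \<open>Phi is concave, so it stays nonnegative between q and p\<close>
  have "(p-q)*Phi t = (p-t)*Phi q + (t-q)*Phi p + (p-q)*(t-q)*(p-t)*(p*q*(1-a0))"
    unfolding Phi_def by (simp add: algebra_simps)
  moreover have "0 \<le> (p-t)*Phi q + (t-q)*Phi p + (p-q)*(t-q)*(p-t)*(p*q*(1-a0))"
    using Phi_q Phi_p tq tp pq a0q q_pos q_le_p p_le_half by (intro add_nonneg_nonneg mult_nonneg_nonneg) auto
  ultimately have "0 \<le> (p-q)*Phi t" by simp
  then have "0 \<le> Phi t"
    using Phi_q tq tp by (cases "p = q") (auto simp: zero_le_mult_iff)
  then show ?thesis unfolding Phi_def D0_def by simp
qed

lemma mix_product_bound_a1_le_p: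
  fixes a0 a1 b0 b1 :: real
  assumes a0: "0 \<le> a0" and a0q: "a0 \<le> q" and a1q: "q \<le> a1" and a1p: "a1 \<le> p"
    and hb1: "b1 * (p*q + (1-p-q)*a0) \<le> p*q*(1-a0)"
    and P10: "a1 * b0 \<le> p*q"
  shows "((1-p)*a0+p*a1)*((1-q)*b0+q*b1) \<le> p*q"
proof -
  define D0 where "D0 = p*q + (1-p-q)*a0"
  define X where "X = (1-p)*a0+p*a1"
  define W where "W = (1-q)*D0 + q*(1-a0)*a1"
  have pq: "0 < p*q" using q_pos q_le_p by simp
  have "0 \<le> (1-p-q)*a0" using a0 q_le_p p_le_half by simp
  then have D0p: "0 < D0" unfolding D0_def using pq by linarith
  have a1pos: "0 < a1" using q_pos a1q by simp
  have XW: "X*W \<le> a1*D0"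
    using middle_window_bound[OF a0 a0q a1q a1p] unfolding X_def W_def D0_def by simp
  have "((1-q)*b0+q*b1)*(a1*D0) = (1-q)*(a1*b0)*D0 + q*(b1*D0)*a1" by (simp add: algebra_simps)
  also have "\<dots> \<le> (1-q)*(p*q)*D0 + q*(p*q*(1-a0))*a1"
    using P10 hb1 D0p a1pos q_le_p p_le_half q_pos unfolding D0_def
    by (intro add_mono mult_right_mono mult_left_mono) auto
  also have "\<dots> = p*q*W" unfolding W_def by (simp add: algebra_simps)
  finally have YD: "((1-q)*b0+q*b1)*(a1*D0) \<le> p*q*W" .
  have X0: "0 \<le> X" unfolding X_def using a0 a1pos p_le_half q_pos q_le_p by simp
  have "(X*((1-q)*b0+q*b1))*(a1*D0) \<le> X*(p*q*W)"
    using YD X0 by (simp add: mult_left_mono mult.assoc)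
  also have "\<dots> = p*q*(X*W)" by (simp add: ac_simps)
  also have "\<dots> \<le> (p*q)*(a1*D0)" using XW pq by (intro mult_left_mono) auto
  finally show ?thesis unfolding X_def using a1pos D0p by simp
qed

lemma partner_denom_pos:
  assumes "0 \<le> t"
  shows "0 < p*q + (1-p-q)*t"
proof -
  have "0 < p*q" "0 \<le> (1-p-q)*t" using assms q_pos q_le_p p_le_half by auto
  then show ?thesis by linarith
qed

lemma le_partner_bound_iff:
  assumes "0 \<le> t"
  shows "b \<le> partner_bound p q t \<longleftrightarrow> b*(p*q + (1-p-q)*t) \<le> p*q*(1-t)"
  unfolding partner_bound_def using pos_le_divide_eq[OF partner_denom_pos[OF assms]] .

lemma partner_bound_p: "partner_bound p q p = q"
proof -
  have "p*q + (1-p-q)*p = p*(1-p)" by (simp add: algebra_simps)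
  moreover have "p*(1-p) \<noteq> 0" using q_pos q_le_p p_le_half by simp
  ultimately show ?thesis unfolding partner_bound_def by (simp add: field_simps)
qed

lemma partner_bound_antimono:
  assumes "0 \<le> x" "x \<le> y"
  shows "partner_bound p q y \<le> partner_bound p q x"
proof -
  define D where "D = (\<lambda>t::real. p*q + (1-p-q)*t)"
  have H: "\<And>s. partner_bound p q s = p*q*(1-s) / D s" unfolding partner_bound_def D_def ..
  have Dx: "0 < D x" and Dy: "0 < D y" using partner_denom_pos assms unfolding D_def by auto
  have "(1-x)*D y - (1-y)*D x = (p*q + (1-p-q))*(y-x)" unfolding D_def by (simp add: algebra_simps)
  moreover have "0 \<le> (p*q + (1-p-q))*(y-x)" using assms q_pos q_le_p p_le_half by simp
  ultimately have "(1-y)*D x \<le> (1-x)*D y" by simp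
  then have "p*q*(1-y)*D x \<le> p*q*(1-x)*D y"
    using q_pos q_le_p mult_left_mono[of _ _ "p*q"] by (simp add: ac_simps)
  then show ?thesis unfolding H using Dx Dy by (simp add: divide_simps mult.commute mult.left_commute)
qed

lemma partner_bound_convex:
  assumes "0 \<le> x" "x \<le> t" "t \<le> y"
  shows "(y-x)*partner_bound p q t \<le> (y-t)*partner_bound p q x + (t-x)*partner_bound p q y"
proof -
  define D where "D = (\<lambda>t::real. p*q + (1-p-q)*t)"
  define H where "H = partner_bound p q"
  have Dx: "0 < D x" and Dy: "0 < D y" and Dt: "0 < D t"
    using partner_denom_pos assms unfolding D_def by auto
  have HD: "H s * D s = p*q*(1-s)" if "0 < D s" for s
    using that unfolding H_def partner_bound_def D_def by simp
  have "(y-t)*(1-x)*D t*D y + (t-x)*(1-y)*D t*D x - (y-x)*(1-t)*D x*D y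
      = (1-p-q)*(1-p-q+p*q)*(t-x)*(y-t)*(y-x)"
    unfolding D_def by (simp add: algebra_simps)
  moreover have "0 \<le> (1-p-q)*(1-p-q+p*q)*(t-x)*(y-t)*(y-x)"
    using assms q_pos q_le_p p_le_half by (intro mult_nonneg_nonneg) auto
  ultimately have ineq: "p*q*((y-x)*(1-t)*D x*D y) \<le> p*q*((y-t)*(1-x)*D t*D y + (t-x)*(1-y)*D t*D x)"
    using q_pos q_le_p by (intro mult_left_mono) auto
  have "((y-x)*H t) * (D x * D y * D t) = p*q*((y-x)*(1-t)*D x*D y)"
    using HD[OF Dt] by (simp add: ac_simps)
  also have "\<dots> \<le> p*q*((y-t)*(1-x)*D t*D y + (t-x)*(1-y)*D t*D x)" by (rule ineq)
  also have "\<dots> = (y-t)*(H x * D x)*D t*D y + (t-x)*(H y * D y)*D t*D x"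
    unfolding HD[OF Dx] HD[OF Dy] by (simp add: algebra_simps)
  also have "\<dots> = ((y-t)*H x + (t-x)*H y) * (D x * D y * D t)" by (simp add: algebra_simps)
  finally show ?thesis unfolding H_def using Dx Dy Dt by simp
qed

lemma partner_product_le:
  assumes t0: "0 \<le> t" and t1: "t \<le> 1"
  shows "p*t*((1-q)*partner_bound p q t + q) \<le> p*q"
proof -
  define D where "D = p*q + (1-p-q)*t"
  have Dt: "0 < D" using partner_denom_pos t0 unfolding D_def .
  have "p*t*((1-q)*partner_bound p q t + q) * D = p*t*((1-q)*(p*q*(1-t)) + q*D)"
    unfolding partner_bound_def D_def[symmetric] using Dt by (simp add: field_simps)
  moreover have "p*q*D - p*t*((1-q)*(p*q*(1-t)) + q*D)
      = p*q*(1-t)*((1-t)*(p*q) + t*((1-2*p)*(1-q)))"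
    unfolding D_def by (simp add: algebra_simps)
  moreover have "0 \<le> p*q*(1-t)*((1-t)*(p*q) + t*((1-2*p)*(1-q)))"
    using t0 t1 q_pos q_le_p p_le_half by (intro mult_nonneg_nonneg add_nonneg_nonneg) auto
  ultimately have "p*t*((1-q)*partner_bound p q t + q) * D \<le> p*q*D" by linarith
  then show ?thesis using Dt by (rule mult_right_le_imp_le)
qed

lemma continuous_on_partner_bound: "continuous_on {0..} (partner_bound p q)"
  unfolding partner_bound_def
  by (intro continuous_intros) (auto dest: partner_denom_pos)

lemma partner_sum_at_p_le:
  assumes "p*p < (1-q)*q + q"
  shows "p*p + ((1-q)*q + q) \<le> 2*sqrt(p*q)"
proof -
  define s where "s = p - q"
  have s0: "0 \<le> s" and ps: "p = q + s" using q_le_p s_def by auto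
  have "s*s \<le> 2*q*(1-q-s)" using assms unfolding ps by (simp add: algebra_simps)
  then have c3: "s*(s*s) \<le> s*(2*q*(1-q-s))" using s0 by (rule mult_left_mono)
  have "4*p*q - (p*p + ((1-q)*q + q))^2
     = s*(4*q*(1-2*p) + 2*q*s*(1-s-q) + (2*q*s*(1-q-s) - s*s*s))"
    unfolding ps by (simp add: algebra_simps power2_eq_square)
  moreover have "0 \<le> s*(4*q*(1-2*p) + 2*q*s*(1-s-q) + (2*q*s*(1-q-s) - s*s*s))"
    using c3 s0 q_pos p_le_half ps by (intro mult_nonneg_nonneg add_nonneg_nonneg) (auto simp: algebra_simps)
  ultimately have "(p*p + ((1-q)*q + q))^2 \<le> (2*sqrt(p*q))^2"
    using q_pos q_le_p by (simp add: power_mult_distrib)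
  then show ?thesis by (rule power2_le_imp_le) (use q_pos q_le_p in simp)
qed

lemma partner_crossing:
  assumes "0 \<le> t" "t \<le> 1" "p*t < (1-q)*partner_bound p q t + q"
  obtains t' where "t \<le> t'" "t' \<le> 1" "(1-q)*partner_bound p q t' + q = p*t'"
proof -
  have "continuous_on {t..1} (\<lambda>s. (1-q)*partner_bound p q s + q - p*s)"
    using continuous_on_subset[OF continuous_on_partner_bound] assms(1) by (intro continuous_intros) auto
  moreover have "(1-q)*partner_bound p q 1 + q - p*1 \<le> 0" unfolding partner_bound_def using q_le_p by simp
  ultimately obtain t' where "t \<le> t'" "t' \<le> 1" "(1-q)*partner_bound p q t' + q - p*t' = 0"
    using IVT2'[of "\<lambda>s. (1-q)*partner_bound p q s + q - p*s" 1 0 t] assms by auto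
  then show ?thesis using that by simp
qed

lemma partner_sum_le:
  assumes tp: "p \<le> t" and t1: "t \<le> 1" and lt: "p*t < (1-q)*partner_bound p q t + q"
  shows "p*t + ((1-q)*partner_bound p q t + q) \<le> 2*sqrt(p*q)"
proof -
  define v where "v = (\<lambda>t. (1-q)*partner_bound p q t + q)"
  define f where "f = (\<lambda>t. p*t + v t)"
  have t0: "0 \<le> t" using tp q_pos q_le_p by simp
  have gap_antimono: "v y - p*y \<le> v x - p*x" if "0 \<le> x" "x \<le> y" for x y
  proof -
    have "(1-q)*partner_bound p q y \<le> (1-q)*partner_bound p q x"
      using partner_bound_antimono[OF that] q_le_p p_le_half by (intro mult_left_mono) auto
    moreover have "p*x \<le> p*y" using that q_pos q_le_p by (intro mult_left_mono) auto
    ultimately show ?thesis unfolding v_def by linarith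
  qed
  obtain t' where t': "t \<le> t'" "t' \<le> 1" "v t' = p*t'"
    using partner_crossing[OF t0 t1 lt] unfolding v_def by blast
  have "0 \<le> t'" using t0 t' by simp
  then have "p*t' * v t' \<le> p*q" using partner_product_le t'(2) unfolding v_def by simp
  then have "(p*t')^2 \<le> p*q" using t'(3) by (simp add: power2_eq_square)
  then have "p*t' \<le> sqrt (p*q)" by (rule real_le_rsqrt)
  then have f_t': "f t' \<le> 2*sqrt(p*q)" unfolding f_def using t'(3) by simp
  have "p*p < v p" using gap_antimono[of p t] tp lt q_pos q_le_p unfolding v_def by simp
  then have f_p: "f p \<le> 2*sqrt(p*q)"
    using partner_sum_at_p_le unfolding f_def v_def partner_bound_p by simp
  have "f t \<le> 2*sqrt(p*q)"
  proof (cases "t' = p")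
    case True
    then show ?thesis using f_p t' tp by simp
  next
    case False
    then have pt': "p < t'" using t' tp by simp
    \<comment> \<open>f is convex, so f t lies below the chord between p and t'\<close>
    have "(t'-p)*partner_bound p q t \<le> (t'-t)*partner_bound p q p + (t-p)*partner_bound p q t'"
      using partner_bound_convex[of p t t'] tp t' q_pos q_le_p by simp
    then have "(1-q)*((t'-p)*partner_bound p q t)
        \<le> (1-q)*((t'-t)*partner_bound p q p + (t-p)*partner_bound p q t')"
      using q_le_p p_le_half by (intro mult_left_mono) auto
    then have "(t'-p)*f t \<le> (t'-t)*f p + (t-p)*f t'"
      unfolding f_def v_def by (simp add: algebra_simps)
    also have "\<dots> \<le> (t'-t)*(2*sqrt(p*q)) + (t-p)*(2*sqrt(p*q))"
      using f_p f_t' t' tp by (intro add_mono mult_left_mono) auto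
    also have "\<dots> = (t'-p)*(2*sqrt(p*q))" by (simp add: algebra_simps)
    finally show ?thesis by (rule mult_left_le_imp_le) (use pt' in simp)
  qed
  then show ?thesis unfolding f_def v_def .
qed

lemma mix_product_bound_p_le_a1:
  fixes a0 a1 b0 b1 :: real
  assumes a0: "0 \<le> a0" and a0q: "a0 \<le> q" and a1p: "p \<le> a1" and a1: "a1 \<le> 1"
    and hb1: "b1 * (p*q + (1-p-q)*a0) \<le> p*q*(1-a0)"
    and hb0: "b0 * (p*q + (1-p-q)*a1) \<le> p*q*(1-a1)"
  shows "((1-p)*a0+p*a1)*((1-q)*b0+q*b1) \<le> p*q"
proof -
  define s where "s = (1-p)*a0"
  define u where "u = p*a1"
  define v where "v = (1-q)*partner_bound p q a1 + q"
  have s0: "0 \<le> s" and u0: "0 \<le> u" unfolding s_def u_def using a0 a1p q_pos q_le_p p_le_half by auto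
  have a1_nonneg: "0 \<le> a1" using a1p q_pos q_le_p by simp
  have "b0 \<le> partner_bound p q a1" using hb0 le_partner_bound_iff[OF a1_nonneg] by simp
  then have "(1-q)*b0 \<le> (1-q)*partner_bound p q a1" using q_le_p p_le_half by (intro mult_left_mono) auto
  moreover have "q*b1 \<le> q - s"
  proof -
    have "(q - s)*(p*q + (1-p-q)*a0) - q*(p*q*(1-a0)) = a0*(1-p-q)*(1-p)*(q-a0)"
      unfolding s_def by (simp add: algebra_simps)
    moreover have "0 \<le> a0*(1-p-q)*(1-p)*(q-a0)" using a0 a0q q_le_p p_le_half by simp
    moreover have "q*b1 * (p*q + (1-p-q)*a0) \<le> q*(p*q*(1-a0))"
      using hb1 q_pos by (simp add: mult.assoc)
    ultimately have "(q*b1) * (p*q + (1-p-q)*a0) \<le> (q - s)*(p*q + (1-p-q)*a0)" by linarith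
    then show ?thesis using partner_denom_pos[OF a0] by simp
  qed
  ultimately have "(1-q)*b0+q*b1 \<le> v - s" unfolding v_def by linarith
  then have "(s + u)*((1-q)*b0+q*b1) \<le> (s + u)*(v - s)" using s0 u0 by (intro mult_left_mono) auto
  then have XY: "((1-p)*a0+p*a1)*((1-q)*b0+q*b1) \<le> (s + u)*(v - s)" unfolding s_def u_def .
  have uv: "u*v \<le> p*q" using partner_product_le[OF a1_nonneg a1] unfolding u_def v_def by simp
  show ?thesis
  proof (cases "v \<le> u")
    case True
    have "(s + u)*(v - s) = u*v + s*(v - u) - s*s" by (simp add: algebra_simps)
    moreover have "s*(v - u) \<le> 0" using True s0 by (simp add: mult_nonneg_nonpos)
    moreover have "0 \<le> s*s" by simp
    ultimately show ?thesis using XY uv by linarith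
  next
    case False
    have "(u + v)^2 - 4*((s + u)*(v - s)) = (u + 2*s - v)^2" by (simp add: algebra_simps power2_eq_square)
    moreover have "0 \<le> (u + 2*s - v)^2" by simp
    ultimately have "4*((s + u)*(v - s)) \<le> (u + v)^2" by linarith
    moreover have "u + v \<le> 2*sqrt(p*q)"
      using partner_sum_le[OF a1p a1] False unfolding u_def v_def by simp
    then have "(u + v)^2 \<le> (2*sqrt(p*q))^2" using u0 False by (intro power_mono) auto
    ultimately show ?thesis using XY q_pos q_le_p by (simp add: power_mult_distrib)
  qed
qed

lemma mix_product_bound:
  fixes a0 a1 b0 b1 :: real
  assumes a0: "0 \<le> a0" and a01: "a0 \<le> a1" and a1: "a1 \<le> 1"
    and P01: "a0 * b1 \<le> p*q" and P10: "a1 * b0 \<le> p*q"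
    and h01: "(1-p)*(1-q)*a0*b1 \<le> p*q*(1-a0)*(1-b1)"
    and h10: "(1-p)*(1-q)*a1*b0 \<le> p*q*(1-a1)*(1-b0)"
  shows "((1-p)*a0+p*a1)*((1-q)*b0+q*b1) \<le> p*q"
proof -
  define X where "X = (1-p)*a0+p*a1"
  have "(1-p)*a0 \<le> (1-p)*a1" "p*a0 \<le> p*a1" using a01 q_pos q_le_p p_le_half by (auto intro: mult_left_mono)
  then have "a0 \<le> X" "X \<le> a1" unfolding X_def by (simp_all add: algebra_simps)
  then have X_bounds: "0 \<le> X" "X \<le> 1" "a0 \<le> X" "X \<le> a1" using a0 a1 by auto
  have hb1: "b1 * (p*q + (1-p-q)*a0) \<le> p*q*(1-a0)" using h01 by (simp add: algebra_simps)
  have hb0: "b0 * (p*q + (1-p-q)*a1) \<le> p*q*(1-a1)" using h10 by (simp add: algebra_simps)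
  consider "X \<le> q \<or> p \<le> X" | "q \<le> a0" | "a0 \<le> q" "q \<le> a1" "a1 \<le> p" | "a0 \<le> q" "p \<le> a1"
    using X_bounds by linarith
  then show ?thesis
  proof cases
    case 1
    with product_bound_outside_window[OF X_bounds(1,2)] mix_odds_bound[OF a0 a01 a1 h01 h10]
    show ?thesis unfolding X_def by blast
  next
    case 2
    show ?thesis
    proof (cases "X < p")
      case True
      then show ?thesis using mix_product_bound_q_le_a0[OF 2 a01 _ P01 P10]
        unfolding X_def by blast
    next
      case False
      then show ?thesis using product_bound_outside_window[OF X_bounds(1,2)]
        mix_odds_bound[OF a0 a01 a1 h01 h10] unfolding X_def by auto
    qed
  next
    case 3
    then show ?thesis using mix_product_bound_a1_le_p[OF a0 _ _ _ hb1 P10] by blast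
  next
    case 4
    then show ?thesis using mix_product_bound_p_le_a1[OF a0 _ _ a1 hb1 hb0] by blast
  qed
qed

lemma feasible_antimono:
  assumes "feasible p q a b" and "0 \<le> a'" "a' \<le> a" "0 \<le> b'" "b' \<le> b"
  shows "feasible p q a' b'"
proof -
  have ab: "a'*b' \<le> a*b" using assms by (intro mult_mono) auto
  have "p*q*a' \<le> p*q*a" "p*q*b' \<le> p*q*b"
    using assms q_pos q_le_p by (auto intro!: mult_left_mono)
  moreover have "(1-p-q)*(a'*b') \<le> (1-p-q)*(a*b)" using ab q_le_p p_le_half by (intro mult_left_mono) auto
  moreover have odds_gap: "p*q*(1-x)*(1-y) - (1-p)*(1-q)*x*y = p*q - p*q*x - p*q*y - (1-p-q)*(x*y)"
    for x y by (simp add: algebra_simps)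
  ultimately have "p*q*(1-a)*(1-b) - (1-p)*(1-q)*a*b \<le> p*q*(1-a')*(1-b') - (1-p)*(1-q)*a'*b'"
    unfolding odds_gap by linarith
  then show ?thesis using assms ab unfolding feasible_def by auto
qed

lemma feasible_mix_extreme:
  assumes "feasible p q a0 b1" "feasible p q a1 b0" and a01: "a0 \<le> a1" and b01: "b0 \<le> b1"
  shows "feasible p q ((1-p)*a0+p*a1) ((1-q)*b0+q*b1)"
proof -
  have h: "0 \<le> a0" "a1 \<le> 1" "0 \<le> b0" "b1 \<le> 1" "a0*b1 \<le> p*q" "a1*b0 \<le> p*q"
     "(1-p)*(1-q)*a0*b1 \<le> p*q*(1-a0)*(1-b1)" "(1-p)*(1-q)*a1*b0 \<le> p*q*(1-a1)*(1-b0)"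
    using assms unfolding feasible_def by auto
  have "(1-p)*a0 \<le> (1-p)*a1" "(1-q)*b0 \<le> (1-q)*b1"
    using a01 b01 q_le_p p_le_half by (auto intro: mult_left_mono)
  moreover have "0 \<le> (1-p)*a0" "0 \<le> p*a1" "0 \<le> (1-q)*b0" "0 \<le> q*b1"
    using h a01 b01 q_pos q_le_p p_le_half by auto
  ultimately have "0 \<le> (1-p)*a0+p*a1" "(1-p)*a0+p*a1 \<le> 1" "0 \<le> (1-q)*b0+q*b1" "(1-q)*b0+q*b1 \<le> 1"
    using h by (auto simp: algebra_simps)
  then show ?thesis
    unfolding feasible_def
    using mix_product_bound[OF h(1) a01 h(2) h(5-8)]
      mix_odds_bound[OF h(1) a01 h(2) h(7,8)]
    by auto
qed

lemma convex_comb_le_max: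
  fixes x y t :: real
  assumes "0 \<le> t" "t \<le> 1"
  shows "(1-t)*x + t*y \<le> max x y"
  using convex_bound_le[of x "max x y" y "1-t" t] assms by simp

lemma feasible_mix:
  assumes R00: "feasible p q a0 b0" and R01: "feasible p q a0 b1" and R10: "feasible p q a1 b0"
    and al: "0 \<le> \<alpha>" "\<alpha> \<le> p" and be: "0 \<le> \<beta>" "\<beta> \<le> q"
  shows "feasible p q ((1-\<alpha>)*a0+\<alpha>*a1) ((1-\<beta>)*b0+\<beta>*b1)"
proof -
  define X where "X = (1-\<alpha>)*a0+\<alpha>*a1"
  define Y where "Y = (1-\<beta>)*b0+\<beta>*b1"
  have bnd: "0 \<le> a0" "0 \<le> a1" "0 \<le> b0" "0 \<le> b1"
    using R00 R01 R10 unfolding feasible_def by auto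
  have al1: "\<alpha> \<le> 1" and be1: "\<beta> \<le> 1" using al be q_le_p p_le_half by auto
  have X0: "0 \<le> X" and Y0: "0 \<le> Y" unfolding X_def Y_def using bnd al al1 be be1 by auto
  have X_max: "X \<le> max a0 a1" and Y_max: "Y \<le> max b0 b1"
    unfolding X_def Y_def using convex_comb_le_max al al1 be be1 by auto
  consider "a1 < a0" | "a0 \<le> a1" "b1 < b0" | "a0 \<le> a1" "b0 \<le> b1" by linarith
  then show ?thesis
  proof cases
    case 1
    then have "feasible p q a0 (max b0 b1)" using R00 R01 by (auto simp: max_def)
    then show ?thesis using feasible_antimono X0 Y0 X_max Y_max 1 unfolding X_def Y_def by auto
  next
    case 2
    then show ?thesis using feasible_antimono[OF R10 X0 _ Y0] X_max Y_max unfolding X_def Y_def by auto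
  next
    case 3
    have "\<alpha>*(a1-a0) \<le> p*(a1-a0)" "\<beta>*(b1-b0) \<le> q*(b1-b0)" using al be 3 by (auto intro: mult_right_mono)
    then have "X \<le> (1-p)*a0+p*a1" "Y \<le> (1-q)*b0+q*b1" unfolding X_def Y_def by (auto simp: algebra_simps)
    then show ?thesis using feasible_antimono[OF feasible_mix_extreme[OF R01 R10 3] X0 _ Y0]
      unfolding X_def Y_def by blast
  qed
qed

end

section \<open>Product measures on finite cubes\<close>

definition bernoulli_weight :: "'a set \<Rightarrow> ('a \<Rightarrow> real) \<Rightarrow> 'a set \<Rightarrow> real" where
  "bernoulli_weight S a x = (\<Prod>l\<in>x. a l) * (\<Prod>k\<in>S - x. 1 - a k)"

definition bernoulli_measure :: "'a set \<Rightarrow> ('a \<Rightarrow> real) \<Rightarrow> 'a set set \<Rightarrow> real" where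
  "bernoulli_measure S a U = (\<Sum>x\<in>U. bernoulli_weight S a x)"

definition slice0 :: "'a \<Rightarrow> 'a set set \<Rightarrow> 'a set set" where
  "slice0 l U = {x\<in>U. l \<notin> x}"

definition slice1 :: "'a \<Rightarrow> 'a set set \<Rightarrow> 'a set set" where
  "slice1 l U = (\<lambda>x. x - {l}) ` {x\<in>U. l \<in> x}"

lemma prod_measure_eq_bernoulli_measure: "prod_measure n a U = bernoulli_measure {1..n} a U"
  unfolding prod_measure_def bernoulli_measure_def bernoulli_weight_def ..

lemma finite_subset_Pow: "finite S \<Longrightarrow> U \<subseteq> Pow S \<Longrightarrow> finite U"
  by (meson finite_Pow_iff finite_subset)

lemma bernoulli_weight_pos:
  assumes "finite S" "x \<subseteq> S" "\<forall>l\<in>S. 0 < a l \<and> a l < 1"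
  shows "0 < bernoulli_weight S a x"
  unfolding bernoulli_weight_def using assms by (intro mult_pos_pos prod_pos) auto

lemma bernoulli_measure_nonneg:
  assumes "finite S" "U \<subseteq> Pow S" "\<forall>l\<in>S. 0 \<le> a l \<and> a l \<le> 1"
  shows "0 \<le> bernoulli_measure S a U"
  unfolding bernoulli_measure_def bernoulli_weight_def
  using assms by (intro sum_nonneg mult_nonneg_nonneg prod_nonneg) auto

lemma bernoulli_measure_strict_mono:
  assumes "finite S" "V \<subset> V'" "V' \<subseteq> Pow S" "\<forall>l\<in>S. 0 < a l \<and> a l < 1"
  shows "bernoulli_measure S a V < bernoulli_measure S a V'"
proof -
  obtain y where y: "y \<in> V' - V" using assms(2) by blast
  have pos: "0 < bernoulli_weight S a x" if "x \<in> V'" for x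
    using bernoulli_weight_pos[OF assms(1) _ assms(4)] that assms(3) by blast
  have "V \<subseteq> V'" using assms(2) by auto
  show ?thesis
    unfolding bernoulli_measure_def
    by (rule sum_strict_mono2[OF finite_subset_Pow[OF assms(1,3)] \<open>V \<subseteq> V'\<close> y])
      (use pos y in \<open>auto intro: less_imp_le\<close>)
qed

lemma bernoulli_measure_mono:
  assumes "finite S" "V \<subseteq> V'" "V' \<subseteq> Pow S" "\<forall>l\<in>S. 0 < a l \<and> a l < 1"
  shows "bernoulli_measure S a V \<le> bernoulli_measure S a V'"
proof (cases "V = V'")
  case False
  with assms(2) have "V \<subset> V'" by auto
  then show ?thesis using bernoulli_measure_strict_mono[OF assms(1) _ assms(3,4)] by (simp add: less_imp_le)
qed simp

lemma bernoulli_measure_cong: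
  assumes "\<forall>l\<in>S. a l = a' l" "U \<subseteq> Pow S"
  shows "bernoulli_measure S a U = bernoulli_measure S a' U"
  unfolding bernoulli_measure_def bernoulli_weight_def
proof (rule sum.cong[OF refl])
  fix x assume "x \<in> U"
  then have "x \<subseteq> S" using assms by auto
  then have "(\<Prod>l\<in>x. a l) = (\<Prod>l\<in>x. a' l)" using assms by (intro prod.cong) auto
  moreover have "(\<Prod>k\<in>S - x. 1 - a k) = (\<Prod>k\<in>S - x. 1 - a' k)" using assms by (intro prod.cong) auto
  ultimately show "(\<Prod>l\<in>x. a l) * (\<Prod>k\<in>S - x. 1 - a k) = (\<Prod>l\<in>x. a' l) * (\<Prod>k\<in>S - x. 1 - a' k)"
    by simp
qed

lemma bernoulli_measure_empty_ground:
  assumes "U \<subseteq> Pow {}"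
  shows "bernoulli_measure {} a U = (if {} \<in> U then 1 else 0)"
proof -
  have "U = {} \<or> U = {{}}" using assms by auto
  then show ?thesis unfolding bernoulli_measure_def bernoulli_weight_def by auto
qed

lemma bernoulli_measure_insert:
  assumes fS: "finite S" and lS: "l \<notin> S" and U: "U \<subseteq> Pow (insert l S)"
  shows "bernoulli_measure (insert l S) a U
           = (1 - a l) * bernoulli_measure S a (slice0 l U) + a l * bernoulli_measure S a (slice1 l U)"
proof -
  have fin: "finite U" using finite_subset_Pow[OF _ U] fS by simp
  have "bernoulli_measure (insert l S) a U
      = (\<Sum>x\<in>{x\<in>U. l\<notin>x} \<union> {x\<in>U. l\<in>x}. bernoulli_weight (insert l S) a x)"
    unfolding bernoulli_measure_def by (rule sum.cong) auto
  also have "\<dots> = (\<Sum>x\<in>{x\<in>U. l\<notin>x}. bernoulli_weight (insert l S) a x)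
        + (\<Sum>x\<in>{x\<in>U. l\<in>x}. bernoulli_weight (insert l S) a x)"
    by (rule sum.union_disjoint) (use fin in auto)
  also have "(\<Sum>x\<in>{x\<in>U. l\<notin>x}. bernoulli_weight (insert l S) a x) = (\<Sum>x\<in>slice0 l U. (1 - a l) * bernoulli_weight S a x)"
    unfolding slice0_def bernoulli_weight_def
  proof (rule sum.cong[OF refl])
    fix x assume x: "x \<in> {x\<in>U. l\<notin>x}"
    then have "insert l S - x = insert l (S - x)" by auto
    then show "(\<Prod>l\<in>x. a l) * (\<Prod>k\<in>insert l S - x. 1 - a k) = (1 - a l) * ((\<Prod>l\<in>x. a l) * (\<Prod>k\<in>S - x. 1 - a k))"
      using fS lS by simp
  qed
  also have "(\<Sum>x\<in>{x\<in>U. l\<in>x}. bernoulli_weight (insert l S) a x) = (\<Sum>x\<in>slice1 l U. a l * bernoulli_weight S a x)"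
  proof -
    have inj: "inj_on (\<lambda>x. x - {l}) {x\<in>U. l\<in>x}"
      unfolding inj_on_def by (metis (mono_tags, lifting) insert_Diff mem_Collect_eq)
    have weight: "bernoulli_weight (insert l S) a x = a l * bernoulli_weight S a (x - {l})"
      if x: "x \<in> {x\<in>U. l\<in>x}" for x
    proof -
      have "x \<subseteq> insert l S" using x U by auto
      then have "finite x" by (rule finite_subset) (use fS in simp)
      then have "(\<Prod>k\<in>x. a k) = a l * (\<Prod>k\<in>x - {l}. a k)" using prod.remove[of x l a] x by simp
      moreover have "insert l S - x = S - (x - {l})" using x lS by auto
      ultimately show ?thesis unfolding bernoulli_weight_def by (simp add: ac_simps)
    qed
    have "(\<Sum>x\<in>slice1 l U. a l * bernoulli_weight S a x) = (\<Sum>x\<in>{x\<in>U. l\<in>x}. a l * bernoulli_weight S a (x - {l}))"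
      unfolding slice1_def using sum.reindex[OF inj, of "\<lambda>x. a l * bernoulli_weight S a x"] by (simp add: comp_def)
    then show ?thesis using weight by simp
  qed
  finally show ?thesis unfolding bernoulli_measure_def by (simp add: sum_distrib_left)
qed

lemma slices_subset_Pow:
  assumes "U \<subseteq> Pow (insert l S)"
  shows "slice0 l U \<subseteq> Pow S" "slice1 l U \<subseteq> Pow S"
  using assms unfolding slice0_def slice1_def by auto

lemma bernoulli_measure_update:
  assumes "finite S" "l \<notin> S" "U \<subseteq> Pow (insert l S)"
  shows "bernoulli_measure (insert l S) (a(l := t)) U = bernoulli_measure (insert l S) a U
           + (t - a l) * (bernoulli_measure S a (slice1 l U) - bernoulli_measure S a (slice0 l U))"
proof -
  have agree: "\<forall>k\<in>S. (a(l := t)) k = a k" using assms(2) by auto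
  have "bernoulli_measure S (a(l := t)) (slice0 l U) = bernoulli_measure S a (slice0 l U)"
    by (rule bernoulli_measure_cong[OF agree slices_subset_Pow(1)[OF assms(3)]])
  moreover have "bernoulli_measure S (a(l := t)) (slice1 l U) = bernoulli_measure S a (slice1 l U)"
    by (rule bernoulli_measure_cong[OF agree slices_subset_Pow(2)[OF assms(3)]])
  ultimately show ?thesis
    unfolding bernoulli_measure_insert[OF assms, of a] bernoulli_measure_insert[OF assms, of "a(l := t)"]
    by (simp add: algebra_simps)
qed

lemma cross_intersecting_slices:
  assumes "cross_intersecting U V"
  shows "cross_intersecting (slice0 l U) (slice0 l V)" "cross_intersecting (slice0 l U) (slice1 l V)"
    "cross_intersecting (slice1 l U) (slice0 l V)"
  using assms unfolding cross_intersecting_def slice0_def slice1_def by auto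

lemma feasible_bernoulli_measure:
  assumes "0 < q" "q \<le> p" "p \<le> 1/2"
  shows "finite S \<Longrightarrow> U1 \<subseteq> Pow S \<Longrightarrow> U2 \<subseteq> Pow S \<Longrightarrow> cross_intersecting U1 U2 \<Longrightarrow>
    \<forall>l\<in>S. 0 \<le> a l \<and> a l \<le> p \<and> 0 \<le> b l \<and> b l \<le> q \<Longrightarrow>
    feasible p q (bernoulli_measure S a U1) (bernoulli_measure S b U2)"
proof (induction S arbitrary: U1 U2 rule: finite_induct)
  case empty
  then have "{} \<notin> U1 \<or> {} \<notin> U2" unfolding cross_intersecting_def by auto
  then show ?case
    using assms bernoulli_measure_empty_ground[OF empty.prems(1)] bernoulli_measure_empty_ground[OF empty.prems(2)]
    unfolding feasible_def by auto
next
  case (insert l S)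
  note sub = slices_subset_Pow[OF insert.prems(1)] slices_subset_Pow[OF insert.prems(2)]
  note cross = cross_intersecting_slices[OF insert.prems(3), of l]
  have ranges: "\<forall>l\<in>S. 0 \<le> a l \<and> a l \<le> p \<and> 0 \<le> b l \<and> b l \<le> q" using insert.prems(4) by auto
  have "0 \<le> a l" "a l \<le> p" "0 \<le> b l" "b l \<le> q" using insert.prems(4) by auto
  then show ?case
    unfolding bernoulli_measure_insert[OF insert.hyps(1,2) insert.prems(1)]
      bernoulli_measure_insert[OF insert.hyps(1,2) insert.prems(2)]
    by (rule feasible_mix[OF assms insert.IH[OF sub(1) sub(3) cross(1) ranges]
        insert.IH[OF sub(1) sub(4) cross(2) ranges] insert.IH[OF sub(2) sub(3) cross(3) ranges]])
qed

lemma bernoulli_measure_product_le: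
  assumes "0 < q" "q \<le> p" "p \<le> 1/2" "finite S" "V1 \<subseteq> Pow S" "V2 \<subseteq> Pow S"
    "cross_intersecting V1 V2" "\<forall>l\<in>S. 0 \<le> a l \<and> a l \<le> p \<and> 0 \<le> b l \<and> b l \<le> q"
  shows "bernoulli_measure S a V1 * bernoulli_measure S b V2 \<le> p * q"
  using feasible_bernoulli_measure[OF assms] unfolding feasible_def by blast

lemma bernoulli_measure_eq_imp_eq:
  assumes "finite S" "V \<subseteq> V'" "V' \<subseteq> Pow S" "\<forall>l\<in>S. 0 < a l \<and> a l < 1"
    and "bernoulli_measure S a V = bernoulli_measure S a V'"
  shows "V = V'"
  using bernoulli_measure_strict_mono[OF assms(1) _ assms(3,4), of V] assms(2,5) by auto

lemma slice0_subset_slice1: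
  assumes "\<forall>x\<in>U. l \<notin> x \<longrightarrow> insert l x \<in> U"
  shows "slice0 l U \<subseteq> slice1 l U"
proof
  fix x assume "x \<in> slice0 l U"
  then have "insert l x \<in> U" "x = insert l x - {l}" using assms unfolding slice0_def by auto
  then show "x \<in> slice1 l U" unfolding slice1_def by blast
qed

lemma remove_closed_of_slices_eq:
  assumes "slice1 l U = slice0 l U" "x \<in> U"
  shows "x - {l} \<in> U"
proof (cases "l \<in> x")
  case True
  then have "x - {l} \<in> slice1 l U" using assms(2) unfolding slice1_def by blast
  then show ?thesis using assms(1) unfolding slice0_def by auto
qed (use assms(2) in simp)

lemma Diff_mem_if_remove_closed:
  assumes "finite T" "\<forall>l\<in>T. \<forall>x\<in>U. x - {l} \<in> U" "x \<in> U"
  shows "x - T \<in> U"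
  using assms
proof (induction T rule: finite_induct)
  case (insert l T)
  then have "(x - T) - {l} \<in> U" by auto
  moreover have "x - insert l T = (x - T) - {l}" by auto
  ultimately show ?case by simp
qed simp

lemma product_le_imp_eq:
  fixes m1 m2 m1' m2' :: real
  assumes "0 < m1" "m1 \<le> m1'" "0 < m2" "m2 \<le> m2'" "m1' * m2' \<le> m1 * m2"
  shows "m1' = m1" "m2' = m2"
proof -
  have "m1' * m2 \<le> m1' * m2'" "m1 * m2' \<le> m1' * m2'" using assms by (auto intro: mult_left_mono mult_right_mono)
  then have "m1' * m2 \<le> m1 * m2" "m1 * m2' \<le> m1 * m2" using assms(5) by linarith+
  then show "m1' = m1" "m2' = m2" using assms by (auto simp: mult_le_cancel_right mult_le_cancel_left)
qed

lemma slice1_eq_slice0_if_determined: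
  assumes U: "U \<subseteq> Pow (insert l S)" and lW: "l \<notin> W"
    and det: "\<forall>x\<in>Pow (insert l S). x \<in> U \<longleftrightarrow> x \<inter> W \<in> U"
  shows "slice1 l U = slice0 l U"
proof
  show "slice1 l U \<subseteq> slice0 l U"
  proof
    fix y assume "y \<in> slice1 l U"
    then obtain x where x: "x \<in> U" "l \<in> x" "y = x - {l}" unfolding slice1_def by blast
    then have "x \<inter> W \<in> U" using det[rule_format, of x] U by auto
    moreover have "y \<inter> W = x \<inter> W" "y \<subseteq> insert l S" using x U lW by auto
    ultimately have "y \<in> U" using det[rule_format, of y] by auto
    then show "y \<in> slice0 l U" using x(3) unfolding slice0_def by simp
  qed
next
  show "slice0 l U \<subseteq> slice1 l U"
  proof
    fix y assume "y \<in> slice0 l U"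
    then have y: "y \<in> U" "l \<notin> y" unfolding slice0_def by auto
    then have "y \<inter> W \<in> U" using det[rule_format, of y] U by auto
    moreover have "insert l y \<inter> W = y \<inter> W" "insert l y \<subseteq> insert l S" using y U lW by auto
    ultimately have "insert l y \<in> U" using det[rule_format, of "insert l y"] by auto
    moreover have "y = insert l y - {l}" using y by auto
    ultimately show "y \<in> slice1 l U" unfolding slice1_def by blast
  qed
qed

lemma bernoulli_measure_determined_aux:
  assumes "finite T"
  shows "T \<inter> W = {} \<Longrightarrow> finite W \<Longrightarrow> U \<subseteq> Pow (W \<union> T) \<Longrightarrow>
    \<forall>x\<in>Pow (W \<union> T). x \<in> U \<longleftrightarrow> x \<inter> W \<in> U \<Longrightarrow>
    bernoulli_measure (W \<union> T) a U = bernoulli_measure W a {x\<in>U. x \<subseteq> W}"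
  using assms
proof (induction T arbitrary: U rule: finite_induct)
  case empty
  then have "{x\<in>U. x \<subseteq> W} = U" by auto
  then show ?case by simp
next
  case (insert l T)
  have lW: "l \<notin> W" and lS: "l \<notin> W \<union> T" using insert.hyps(2) insert.prems(1) by auto
  have S: "W \<union> insert l T = insert l (W \<union> T)" by auto
  have U: "U \<subseteq> Pow (insert l (W \<union> T))" using insert.prems(3) S by simp
  have det: "\<forall>x\<in>Pow (insert l (W \<union> T)). x \<in> U \<longleftrightarrow> x \<inter> W \<in> U" using insert.prems(4) S by simp
  note slices = slice1_eq_slice0_if_determined[OF U lW det]
  have "bernoulli_measure (W \<union> insert l T) a U = bernoulli_measure (W \<union> T) a (slice0 l U)"
  proof -
    have fin: "finite (W \<union> T)" using insert.hyps(1) insert.prems(2) by simp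
    show ?thesis unfolding S bernoulli_measure_insert[OF fin lS U] slices by (simp add: algebra_simps)
  qed
  also have "\<dots> = bernoulli_measure W a {x\<in>slice0 l U. x \<subseteq> W}"
  proof (rule insert.IH)
    show "slice0 l U \<subseteq> Pow (W \<union> T)" using slices_subset_Pow(1)[OF U] .
    show "\<forall>x\<in>Pow (W \<union> T). x \<in> slice0 l U \<longleftrightarrow> x \<inter> W \<in> slice0 l U"
      using det lS unfolding slice0_def by auto
  qed (use insert.prems in auto)
  also have "{x\<in>slice0 l U. x \<subseteq> W} = {x\<in>U. x \<subseteq> W}" using lW unfolding slice0_def by auto
  finally show ?case .
qed

lemma bernoulli_measure_determined:
  assumes "finite S" "W \<subseteq> S" "U \<subseteq> Pow S" "\<forall>x\<in>Pow S. x \<in> U \<longleftrightarrow> x \<inter> W \<in> U"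
  shows "bernoulli_measure S a U = bernoulli_measure W a {x\<in>U. x \<subseteq> W}"
proof -
  have S: "W \<union> (S - W) = S" using assms(2) by auto
  show ?thesis
    using bernoulli_measure_determined_aux[of "S - W" W U a] assms finite_subset[OF assms(2,1)]
    unfolding S by auto
qed

lemma bernoulli_measure_half:
  assumes "finite W" "\<forall>l\<in>W. a l = 1/2" "V \<subseteq> Pow W"
  shows "bernoulli_measure W a V = real (card V) / 2 ^ card W"
proof -
  have "bernoulli_weight W a x = (1/2) ^ card W" if "x \<in> V" for x
  proof -
    have x: "x \<subseteq> W" using that assms(3) by auto
    then have "finite x" using finite_subset assms(1) by blast
    have "(\<Prod>l\<in>x. a l) = (\<Prod>l\<in>x. 1/2)" by (rule prod.cong) (use x assms(2) in auto)
    moreover have "(\<Prod>k\<in>W - x. 1 - a k) = (\<Prod>k\<in>W - x. 1/2)" by (rule prod.cong) (use assms(2) in auto)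
    ultimately have "(\<Prod>l\<in>x. a l) = (1/2) ^ card x" "(\<Prod>k\<in>W - x. 1 - a k) = (1/2) ^ card (W - x)"
      by simp_all
    moreover have "card x + card (W - x) = card W"
      using x \<open>finite x\<close> assms(1) by (metis card_Diff_subset card_mono le_add_diff_inverse)
    ultimately show ?thesis unfolding bernoulli_weight_def by (metis power_add)
  qed
  then have "bernoulli_measure W a V = real (card V) * (1/2) ^ card W"
    unfolding bernoulli_measure_def by simp
  then show ?thesis by (simp add: power_one_over)
qed

lemma card_cross_intersecting_le:
  assumes fW: "finite W" and V1: "V1 \<subseteq> Pow W" and V2: "V2 \<subseteq> Pow W"
    and cross: "cross_intersecting V1 V2"
  shows "card V1 + card V2 \<le> 2 ^ card W"
proof -
  \<comment> \<open>complementation maps V1 injectively into the sets outside V2\<close>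
  have inj: "inj_on (\<lambda>x. W - x) V1" using V1 unfolding inj_on_def by blast
  have "W - x \<notin> V2" if "x \<in> V1" for x
  proof
    assume "W - x \<in> V2"
    then have "x \<inter> (W - x) \<noteq> {}" using cross that unfolding cross_intersecting_def by blast
    then show False by blast
  qed
  then have "(\<lambda>x. W - x) ` V1 \<subseteq> Pow W - V2" by blast
  then have "card ((\<lambda>x. W - x) ` V1) \<le> card (Pow W - V2)" using fW by (intro card_mono) auto
  then have "card V1 \<le> card (Pow W) - card V2"
    using card_image[OF inj] V2 fW by (simp add: card_Diff_subset finite_subset)
  moreover have "card V2 \<le> card (Pow W)" using card_mono[OF _ V2] fW by simp
  ultimately show ?thesis using fW by (simp add: card_Pow)
qed

lemma cards_eq_half:
  fixes v1 v2 k :: nat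
  assumes k: "1 \<le> k" and sum: "v1 + v2 \<le> 2 ^ k"
    and prod: "(real v1 / 2 ^ k) * (real v2 / 2 ^ k) = 1/4"
  shows "v1 = 2 ^ (k - 1)" "v2 = 2 ^ (k - 1)"
proof -
  define N :: real where "N = 2 ^ k"
  have prod': "4 * (real v1 * real v2) = N * N" using prod unfolding N_def by (simp add: field_simps)
  have sum': "real v1 + real v2 \<le> N" using sum unfolding N_def by (metis of_nat_add of_nat_le_iff of_nat_numeral of_nat_power)
  \<comment> \<open>AM-GM: the sum is at least 2 sqrt(v1 v2) = N, with equality only for v1 = v2\<close>
  have sq: "(real v1 - real v2)^2 = (real v1 + real v2)^2 - N^2"
    using prod' by (simp add: power2_eq_square algebra_simps)
  then have "N^2 \<le> (real v1 + real v2)^2" by (metis diff_ge_0_iff_ge zero_le_power2)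
  then have "N \<le> real v1 + real v2" by (rule power2_le_imp_le) simp
  then have sum_eq: "real v1 + real v2 = N" using sum' by simp
  then have "real v1 = real v2" using sq by simp
  then have "real v1 = N / 2" "real v2 = N / 2" using sum_eq by simp_all
  moreover have "N / 2 = real (2 ^ (k - 1))" using k unfolding N_def by (cases k) auto
  ultimately show "v1 = 2 ^ (k - 1)" "v2 = 2 ^ (k - 1)" by (simp_all only: of_nat_eq_iff)
qed

lemma family_eq_join_restr:
  assumes U: "U \<subseteq> Pow S" and w: "w \<subseteq> S" and det: "\<forall>x\<in>Pow S. x \<in> U \<longleftrightarrow> x \<inter> w \<in> U"
  shows "U = {x \<union> y | x y. x \<in> restr U w \<and> y \<in> Pow (S - w)}"
proof
  show "U \<subseteq> {x \<union> y | x y. x \<in> restr U w \<and> y \<in> Pow (S - w)}"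
  proof
    fix z assume "z \<in> U"
    then have "z = (z \<inter> w) \<union> (z - w)" "z \<inter> w \<in> restr U w" "z - w \<in> Pow (S - w)"
      using U unfolding restr_def by auto
    then show "z \<in> {x \<union> y | x y. x \<in> restr U w \<and> y \<in> Pow (S - w)}" by blast
  qed
  show "{x \<union> y | x y. x \<in> restr U w \<and> y \<in> Pow (S - w)} \<subseteq> U"
  proof
    fix t assume "t \<in> {x \<union> y | x y. x \<in> restr U w \<and> y \<in> Pow (S - w)}"
    then obtain z y where zy: "z \<in> U" "y \<subseteq> S - w" "t = (z \<inter> w) \<union> y" unfolding restr_def by blast
    have "t \<subseteq> S" "t \<inter> w = z \<inter> w" using zy U w by auto
    moreover have "z \<inter> w \<in> U" using det[rule_format, of z] zy(1) U by auto
    ultimately show "t \<in> U" using det[rule_format, of t] by auto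
  qed
qed

section \<open>Extremal cross-intersecting pairs\<close>

locale extremal_pair =
  fixes p q :: real and S :: "'a set" and a b :: "'a \<Rightarrow> real" and U1 U2 :: "'a set set"
  assumes q_pos: "0 < q" and q_le_p: "q \<le> p" and p_le_half: "p \<le> 1/2"
    and finite_S: "finite S"
    and a_range: "\<forall>l\<in>S. 0 < a l \<and> a l \<le> p"
    and b_range: "\<forall>l\<in>S. 0 < b l \<and> b l \<le> q"
    and U1_sub: "U1 \<subseteq> Pow S" and U2_sub: "U2 \<subseteq> Pow S"
    and cross: "cross_intersecting U1 U2"
    and extremal: "bernoulli_measure S a U1 * bernoulli_measure S b U2 = p * q"
begin

definition top_coords :: "'a set" where
  "top_coords = {l\<in>S. a l = p \<and> b l = q}"

lemma a_open: "\<forall>l\<in>S. 0 < a l \<and> a l < 1"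
  using a_range q_le_p p_le_half by fastforce

lemma b_open: "\<forall>l\<in>S. 0 < b l \<and> b l < 1"
  using b_range q_le_p p_le_half by fastforce

lemma product_le:
  assumes "V1 \<subseteq> Pow S" "V2 \<subseteq> Pow S" "cross_intersecting V1 V2"
  shows "bernoulli_measure S a V1 * bernoulli_measure S b V2 \<le> p * q"
proof -
  have "\<forall>l\<in>S. 0 \<le> a l \<and> a l \<le> p \<and> 0 \<le> b l \<and> b l \<le> q" using a_range b_range by fastforce
  then show ?thesis by (rule bernoulli_measure_product_le[OF q_pos q_le_p p_le_half finite_S assms])
qed

lemma measures_pos: "0 < bernoulli_measure S a U1" "0 < bernoulli_measure S b U2"
proof -
  have "\<forall>l\<in>S. 0 \<le> a l \<and> a l \<le> 1" "\<forall>l\<in>S. 0 \<le> b l \<and> b l \<le> 1" using a_open b_open by fastforce+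
  then have "0 \<le> bernoulli_measure S a U1" "0 \<le> bernoulli_measure S b U2"
    using bernoulli_measure_nonneg[OF finite_S U1_sub] bernoulli_measure_nonneg[OF finite_S U2_sub] by auto
  moreover have "bernoulli_measure S a U1 \<noteq> 0" "bernoulli_measure S b U2 \<noteq> 0"
    using extremal q_pos q_le_p by auto
  ultimately show "0 < bernoulli_measure S a U1" "0 < bernoulli_measure S b U2" by auto
qed

lemma mem_U1_iff: "x \<in> U1 \<longleftrightarrow> x \<subseteq> S \<and> (\<forall>y\<in>U2. x \<inter> y \<noteq> {})"
proof (intro iffI; (elim conjE)?)
  assume x: "x \<subseteq> S" "\<forall>y\<in>U2. x \<inter> y \<noteq> {}"
  show "x \<in> U1"
  proof (rule ccontr)
    assume "x \<notin> U1"
    then have "U1 \<subset> insert x U1" by auto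
    then have "bernoulli_measure S a U1 < bernoulli_measure S a (insert x U1)"
      using bernoulli_measure_strict_mono[OF finite_S _ _ a_open] x U1_sub by auto
    then have "p * q < bernoulli_measure S a (insert x U1) * bernoulli_measure S b U2"
      using measures_pos(2) extremal by (metis mult_strict_right_mono)
    moreover have "cross_intersecting (insert x U1) U2" using x cross unfolding cross_intersecting_def by auto
    ultimately show False using product_le[of "insert x U1" U2] x U1_sub U2_sub by auto
  qed
qed (use U1_sub cross in \<open>auto simp: cross_intersecting_def\<close>)

lemma mem_U2_iff: "y \<in> U2 \<longleftrightarrow> y \<subseteq> S \<and> (\<forall>x\<in>U1. x \<inter> y \<noteq> {})"
proof (intro iffI; (elim conjE)?)
  assume y: "y \<subseteq> S" "\<forall>x\<in>U1. x \<inter> y \<noteq> {}"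
  show "y \<in> U2"
  proof (rule ccontr)
    assume "y \<notin> U2"
    then have "U2 \<subset> insert y U2" by auto
    then have "bernoulli_measure S b U2 < bernoulli_measure S b (insert y U2)"
      using bernoulli_measure_strict_mono[OF finite_S _ _ b_open] y U2_sub by auto
    then have "p * q < bernoulli_measure S a U1 * bernoulli_measure S b (insert y U2)"
      using measures_pos(1) extremal by (metis mult_strict_left_mono)
    moreover have "cross_intersecting U1 (insert y U2)" using y cross unfolding cross_intersecting_def by auto
    ultimately show False using product_le[of U1 "insert y U2"] y U1_sub U2_sub by auto
  qed
qed (use U2_sub cross in \<open>auto simp: cross_intersecting_def\<close>)

lemma U1_upward: "y \<in> U1 \<Longrightarrow> y \<subseteq> x \<Longrightarrow> x \<subseteq> S \<Longrightarrow> x \<in> U1"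
  unfolding mem_U1_iff[of x] mem_U1_iff[of y] by blast

lemma U2_upward: "y \<in> U2 \<Longrightarrow> y \<subseteq> x \<Longrightarrow> x \<subseteq> S \<Longrightarrow> x \<in> U2"
  unfolding mem_U2_iff[of x] mem_U2_iff[of y] by blast

lemma U2_remove_closed_if_U1:
  assumes "\<forall>x\<in>U1. x - {l} \<in> U1"
  shows "\<forall>y\<in>U2. y - {l} \<in> U2"
proof
  fix y assume y: "y \<in> U2"
  have "x \<inter> (y - {l}) \<noteq> {}" if "x \<in> U1" for x
  proof -
    have "(x - {l}) \<inter> y \<noteq> {}" using assms that y cross unfolding cross_intersecting_def by blast
    then show ?thesis by blast
  qed
  then show "y - {l} \<in> U2" using y U2_sub by (auto simp: mem_U2_iff)
qed

lemma U1_remove_closed_if_U2: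
  assumes "\<forall>y\<in>U2. y - {l} \<in> U2"
  shows "\<forall>x\<in>U1. x - {l} \<in> U1"
proof
  fix x assume x: "x \<in> U1"
  have "(x - {l}) \<inter> y \<noteq> {}" if "y \<in> U2" for y
  proof -
    have "x \<inter> (y - {l}) \<noteq> {}" using assms that x cross unfolding cross_intersecting_def by blast
    then show ?thesis by blast
  qed
  then show "x - {l} \<in> U1" using x U1_sub by (auto simp: mem_U1_iff)
qed

lemma slice0_subset_slice1_U1: "l \<in> S \<Longrightarrow> slice0 l U1 \<subseteq> slice1 l U1"
  by (rule slice0_subset_slice1) (use U1_sub in \<open>auto intro: U1_upward\<close>)

lemma slice0_subset_slice1_U2: "l \<in> S \<Longrightarrow> slice0 l U2 \<subseteq> slice1 l U2"
  by (rule slice0_subset_slice1) (use U2_sub in \<open>auto intro: U2_upward\<close>)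

lemma raising_weight_gains_nothing:
  assumes l: "l \<in> S"
  shows "(p - a l) * (bernoulli_measure (S - {l}) a (slice1 l U1) - bernoulli_measure (S - {l}) a (slice0 l U1)) = 0"
    and "(q - b l) * (bernoulli_measure (S - {l}) b (slice1 l U2) - bernoulli_measure (S - {l}) b (slice0 l U2)) = 0"
proof -
  define S' where "S' = S - {l}"
  have S: "insert l S' = S" and fin: "finite S'" and lS': "l \<notin> S'" using l finite_S unfolding S'_def by auto
  have U1: "U1 \<subseteq> Pow (insert l S')" and U2: "U2 \<subseteq> Pow (insert l S')" using U1_sub U2_sub S by auto
  define d1 where "d1 = bernoulli_measure S' a (slice1 l U1) - bernoulli_measure S' a (slice0 l U1)"
  define d2 where "d2 = bernoulli_measure S' b (slice1 l U2) - bernoulli_measure S' b (slice0 l U2)"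
  have "\<forall>k\<in>S'. 0 < a k \<and> a k < 1" "\<forall>k\<in>S'. 0 < b k \<and> b k < 1" using a_open b_open unfolding S'_def by auto
  then have "0 \<le> d1" "0 \<le> d2"
    unfolding d1_def d2_def
    using bernoulli_measure_mono[OF fin slice0_subset_slice1_U1[OF l] slices_subset_Pow(2)[OF U1]]
      bernoulli_measure_mono[OF fin slice0_subset_slice1_U2[OF l] slices_subset_Pow(2)[OF U2]]
    by auto
  moreover have "a l \<le> p" "b l \<le> q" using a_range b_range l by auto
  ultimately have "0 \<le> (p - a l) * d1" "0 \<le> (q - b l) * d2" by auto
  moreover have "bernoulli_measure S (a(l := p)) U1 = bernoulli_measure S a U1 + (p - a l) * d1"
    and "bernoulli_measure S (b(l := q)) U2 = bernoulli_measure S b U2 + (q - b l) * d2"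
    using bernoulli_measure_update[OF fin lS' U1] bernoulli_measure_update[OF fin lS' U2]
    unfolding S d1_def d2_def by auto
  \<comment> \<open>raising the weights of l to p, q keeps the product at most p q, so neither measure can grow\<close>
  moreover have "\<forall>k\<in>S. 0 \<le> (a(l := p)) k \<and> (a(l := p)) k \<le> p \<and> 0 \<le> (b(l := q)) k \<and> (b(l := q)) k \<le> q"
    using a_range b_range q_pos q_le_p by auto
  then have "bernoulli_measure S (a(l := p)) U1 * bernoulli_measure S (b(l := q)) U2 \<le> p * q"
    by (rule bernoulli_measure_product_le[OF q_pos q_le_p p_le_half finite_S U1_sub U2_sub cross])
  ultimately have "(bernoulli_measure S a U1 + (p - a l) * d1) * (bernoulli_measure S b U2 + (q - b l) * d2)
      \<le> bernoulli_measure S a U1 * bernoulli_measure S b U2"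
    using extremal by simp
  moreover have "bernoulli_measure S a U1 \<le> bernoulli_measure S a U1 + (p - a l) * d1"
    "bernoulli_measure S b U2 \<le> bernoulli_measure S b U2 + (q - b l) * d2"
    using \<open>0 \<le> (p - a l) * d1\<close> \<open>0 \<le> (q - b l) * d2\<close> by simp_all
  ultimately have "bernoulli_measure S a U1 + (p - a l) * d1 = bernoulli_measure S a U1"
    "bernoulli_measure S b U2 + (q - b l) * d2 = bernoulli_measure S b U2"
    using product_le_imp_eq[OF measures_pos(1) _ measures_pos(2)] by blast+
  then show "(p - a l) * (bernoulli_measure (S - {l}) a (slice1 l U1) - bernoulli_measure (S - {l}) a (slice0 l U1)) = 0"
    "(q - b l) * (bernoulli_measure (S - {l}) b (slice1 l U2) - bernoulli_measure (S - {l}) b (slice0 l U2)) = 0"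
    unfolding d1_def d2_def S'_def by auto
qed

lemma remove_closed_outside_top:
  assumes l: "l \<in> S" and "l \<notin> top_coords"
  shows "\<forall>x\<in>U1. x - {l} \<in> U1" "\<forall>y\<in>U2. y - {l} \<in> U2"
proof -
  have fin: "finite (S - {l})" using finite_S by simp
  have U1: "U1 \<subseteq> Pow (insert l (S - {l}))" and U2: "U2 \<subseteq> Pow (insert l (S - {l}))"
    using U1_sub U2_sub by auto
  have pos: "\<forall>k\<in>S - {l}. 0 < a k \<and> a k < 1" "\<forall>k\<in>S - {l}. 0 < b k \<and> b k < 1" using a_open b_open by auto
  have "(\<forall>x\<in>U1. x - {l} \<in> U1) \<or> (\<forall>y\<in>U2. y - {l} \<in> U2)"
  proof (cases "a l = p")
    case False
    then have "bernoulli_measure (S - {l}) a (slice0 l U1) = bernoulli_measure (S - {l}) a (slice1 l U1)"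
      using raising_weight_gains_nothing(1)[OF l] by simp
    then have "slice1 l U1 = slice0 l U1"
      using bernoulli_measure_eq_imp_eq[OF fin slice0_subset_slice1_U1[OF l] slices_subset_Pow(2)[OF U1] pos(1)]
      by simp
    then show ?thesis using remove_closed_of_slices_eq[of l U1] by blast
  next
    case True
    then have "b l \<noteq> q" using assms unfolding top_coords_def by simp
    then have "bernoulli_measure (S - {l}) b (slice0 l U2) = bernoulli_measure (S - {l}) b (slice1 l U2)"
      using raising_weight_gains_nothing(2)[OF l] by simp
    then have "slice1 l U2 = slice0 l U2"
      using bernoulli_measure_eq_imp_eq[OF fin slice0_subset_slice1_U2[OF l] slices_subset_Pow(2)[OF U2] pos(2)]
      by simp
    then show ?thesis using remove_closed_of_slices_eq[of l U2] by blast
  qed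
  then show "\<forall>x\<in>U1. x - {l} \<in> U1" "\<forall>y\<in>U2. y - {l} \<in> U2"
    using U2_remove_closed_if_U1[of l] U1_remove_closed_if_U2[of l] by blast+
qed

lemma mem_U1_iff_inter_top: "x \<subseteq> S \<Longrightarrow> x \<in> U1 \<longleftrightarrow> x \<inter> top_coords \<in> U1"
proof
  assume "x \<subseteq> S" "x \<in> U1"
  then have "x - (S - top_coords) \<in> U1"
    using Diff_mem_if_remove_closed[of "S - top_coords" U1 x] finite_S remove_closed_outside_top(1) by blast
  moreover have "x - (S - top_coords) = x \<inter> top_coords" using \<open>x \<subseteq> S\<close> by blast
  ultimately show "x \<inter> top_coords \<in> U1" by simp
qed (auto intro: U1_upward)

lemma mem_U2_iff_inter_top: "x \<subseteq> S \<Longrightarrow> x \<in> U2 \<longleftrightarrow> x \<inter> top_coords \<in> U2"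
proof
  assume "x \<subseteq> S" "x \<in> U2"
  then have "x - (S - top_coords) \<in> U2"
    using Diff_mem_if_remove_closed[of "S - top_coords" U2 x] finite_S remove_closed_outside_top(2) by blast
  moreover have "x - (S - top_coords) = x \<inter> top_coords" using \<open>x \<subseteq> S\<close> by blast
  ultimately show "x \<inter> top_coords \<in> U2" by simp
qed (auto intro: U2_upward)

lemma restr_top_eq:
  "restr U1 top_coords = {x\<in>U1. x \<subseteq> top_coords}" "restr U2 top_coords = {x\<in>U2. x \<subseteq> top_coords}"
  unfolding restr_def using U1_sub U2_sub mem_U1_iff_inter_top mem_U2_iff_inter_top by (auto intro!: image_eqI)

lemma cross_intersecting_restr_top: "cross_intersecting (restr U1 top_coords) (restr U2 top_coords)"
  using cross unfolding restr_top_eq cross_intersecting_def by blast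

lemma bernoulli_measure_restr_top:
  "bernoulli_measure S a U1 = bernoulli_measure top_coords a (restr U1 top_coords)"
  "bernoulli_measure S b U2 = bernoulli_measure top_coords b (restr U2 top_coords)"
  unfolding restr_top_eq
  using bernoulli_measure_determined[OF finite_S _ U1_sub] bernoulli_measure_determined[OF finite_S _ U2_sub]
    mem_U1_iff_inter_top mem_U2_iff_inter_top
  unfolding top_coords_def by auto

lemma card_restr_top_half:
  assumes "p = 1/2" "q = 1/2" "top_coords \<noteq> {}"
  shows "card (restr U1 top_coords) = 2 ^ (card top_coords - 1)"
    "card (restr U2 top_coords) = 2 ^ (card top_coords - 1)"
proof -
  have fin: "finite top_coords" using finite_S unfolding top_coords_def by simp
  have sub: "restr U1 top_coords \<subseteq> Pow top_coords" "restr U2 top_coords \<subseteq> Pow top_coords"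
    unfolding restr_top_eq by auto
  have "\<forall>l\<in>top_coords. a l = 1/2" "\<forall>l\<in>top_coords. b l = 1/2" using assms(1,2) unfolding top_coords_def by auto
  then have "bernoulli_measure top_coords a (restr U1 top_coords) = real (card (restr U1 top_coords)) / 2 ^ card top_coords"
    "bernoulli_measure top_coords b (restr U2 top_coords) = real (card (restr U2 top_coords)) / 2 ^ card top_coords"
    using bernoulli_measure_half[OF fin _ sub(1)] bernoulli_measure_half[OF fin _ sub(2)] by blast+
  then have "(real (card (restr U1 top_coords)) / 2 ^ card top_coords)
      * (real (card (restr U2 top_coords)) / 2 ^ card top_coords) = p * q"
    using extremal unfolding bernoulli_measure_restr_top by simp
  also have "p * q = 1/4" unfolding assms(1,2) by simp
  finally have "(real (card (restr U1 top_coords)) / 2 ^ card top_coords)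
      * (real (card (restr U2 top_coords)) / 2 ^ card top_coords) = 1/4" .
  moreover have "1 \<le> card top_coords" using assms(3) fin by (simp add: Suc_le_eq card_gt_0_iff)
  ultimately show "card (restr U1 top_coords) = 2 ^ (card top_coords - 1)"
    "card (restr U2 top_coords) = 2 ^ (card top_coords - 1)"
    using cards_eq_half card_cross_intersecting_le[OF fin sub cross_intersecting_restr_top] by blast+
qed

end

theorem lemma2:
  fixes n :: nat and p1 p2 :: "nat \<Rightarrow> real" and U1 U2 :: "nat set set" and w :: "nat set"
  assumes "n \<ge> 1"
    and "prob_vector n p1" and "prob_vector n p2"
    and "p1 1 = Max (p1 ` {1..n})" and "p2 1 = Max (p2 ` {1..n})"
    and "p1 1 \<ge> p2 1" and "p1 1 \<le> 1/2"
    and "w = {l\<in>{1..n}. p1 l = p1 1 \<and> p2 l = p2 1}"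
    and "U1 \<subseteq> Pow {1..n}" and "U2 \<subseteq> Pow {1..n}"
    and "cross_intersecting U1 U2"
    and "prod_measure n p1 U1 * prod_measure n p2 U2 = p1 1 * p2 1"
  shows "U1 = {x \<union> y | x y. x \<in> restr U1 w \<and> y \<in> Pow ({1..n} - w)}
       \<and> U2 = {x \<union> y | x y. x \<in> restr U2 w \<and> y \<in> Pow ({1..n} - w)}
       \<and> (\<forall>x\<in>Pow {1..n}. x \<in> U1 \<longleftrightarrow> x \<inter> w \<in> U1)
       \<and> (\<forall>x\<in>Pow {1..n}. x \<in> U2 \<longleftrightarrow> x \<inter> w \<in> U2)
       \<and> cross_intersecting (restr U1 w) (restr U2 w)
       \<and> (p1 1 = 1/2 \<and> p2 1 = 1/2 \<longrightarrow>
            card (restr U1 w) = 2 ^ (card w - 1) \<and> card (restr U2 w) = 2 ^ (card w - 1))"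
proof -
  have one: "1 \<in> {1..n}" using assms(1) by simp
  have "extremal_pair (p1 1) (p2 1) {1..n} p1 p2 U1 U2"
  proof
    show "0 < p2 1" using assms(3) one unfolding prob_vector_def by blast
    show "\<forall>l\<in>{1..n}. 0 < p1 l \<and> p1 l \<le> p1 1" "\<forall>l\<in>{1..n}. 0 < p2 l \<and> p2 l \<le> p2 1"
      using assms(2-5) unfolding prob_vector_def by auto
    show "bernoulli_measure {1..n} p1 U1 * bernoulli_measure {1..n} p2 U2 = p1 1 * p2 1"
      using assms(12) unfolding prod_measure_eq_bernoulli_measure .
  qed (use assms in auto)
  then interpret extremal_pair "p1 1" "p2 1" "{1..n}" p1 p2 U1 U2 .
  have w: "w = top_coords" unfolding top_coords_def assms(8) ..
  have w_ne: "w \<noteq> {}" using one unfolding assms(8) by auto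
  have w_sub: "w \<subseteq> {1..n}" unfolding w top_coords_def by auto
  have det: "\<forall>x\<in>Pow {1..n}. x \<in> U1 \<longleftrightarrow> x \<inter> w \<in> U1" "\<forall>x\<in>Pow {1..n}. x \<in> U2 \<longleftrightarrow> x \<inter> w \<in> U2"
    unfolding w using mem_U1_iff_inter_top mem_U2_iff_inter_top by blast+
  have "p1 1 = 1/2 \<and> p2 1 = 1/2 \<longrightarrow>
      card (restr U1 w) = 2 ^ (card w - 1) \<and> card (restr U2 w) = 2 ^ (card w - 1)"
    using card_restr_top_half w_ne unfolding w by blast
  then show ?thesis
    using family_eq_join_restr[OF U1_sub w_sub det(1)] family_eq_join_restr[OF U2_sub w_sub det(2)]
      det cross_intersecting_restr_top unfolding w by (intro conjI)
qed

end
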